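(* Let $C,A^1,\dots,A^m\in\mathbb{S}^n$, $b\in\mathbb{R}^m$, with $\mathbf{P}$ and $\mathbf{D}$ feasible and $\mathbf{D}$ of singularity degree one, and let $0\le r<n$ be such that, writing $L(y)=C-\sum_iA^iy_i$ in blocks $L_{11}(y)\in\mathbb{S}^r$, $L_{12}(y)\in\mathbb{R}^{r\times(n-r)}$, $L_{22}(y)\in\mathbb{S}^{n-r}$: (a) for every $y$, $L(y)\succeq0$ iff $L_{12}(y)=0$, $L_{22}(y)=0$, $L_{11}(y)\succeq0$; (b) some $y$ has $L_{12}(y)=0$, $L_{22}(y)=0$, $L_{11}(y)\succ0$; (c) there is $X=\mathrm{diag}(0,X_{22})$ with $X_{22}\succ0$, $C\bullet X=0$, $A^i\bullet X=0$ for all $i$. Let $M>0$ be a constant such that for all $t\ge0$ and $y$, $L_{22}(y)+tI_{22}\succeq0$ implies $tMI_{22}\succeq L_{22}(y)+tI_{22}$, and set $K:=M(v(\mathbf{P})-v(\mathbf{D})+2)$. For $\alpha>0$, $t>0$ consider $$\mathbf{RD1}(\alpha,t):\ \max_y\ b^Ty-\frac{\|L_{12}(y)\|_F^2}{M\alpha}\ \text{ s.t. } L(y)+t\alpha I\succeq0 .$$ Then for every $\alpha>0$ there exists $\hat t_\alpha>0$ such that, for every $t\in(0,\hat t_\alpha)$ and every optimal sequence $\{y^k\}$ of $\mathbf{RD1}(\alpha,t)$, we have $\|L_{12}(y^k)\|_F^2\le K\alpha$ for all sufficiently large $k$.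
   Context: $\mathbf{P}$: $\min_X C\bullet X$ s.t. $A^i\bullet X=b_i$, $X\succeq0$; $\mathbf{D}$: $\max_y b^Ty$ s.t. $C-\sum_iA^iy_i\succeq0$; $v(\mathbf{P}),v(\mathbf{D})$ are their (finite) optimal values. $\mathbf{D}$ has singularity degree one if it is feasible and there exists a nonzero $X\succeq0$ with $C\bullet X=0$, $A^i\bullet X=0$ for all $i$, such that some $y$ has $C-\sum_iA^iy_i$ in the relative interior of $\{Z\succeq0: Z\bullet X=0\}$. An optimal sequence of $\mathbf{RD1}(\alpha,t)$ is a sequence of feasible points whose objective values converge to the optimal value (supremum) of $\mathbf{RD1}(\alpha,t)$. $\|\cdot\|_F$ is the Frobenius norm; $I_{22}$ is the $(n-r)\times(n-r)$ identity. *)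

theory Defs
  imports "HOL-Analysis.Analysis"
begin

text \<open>Matrices are represented as functions nat => nat => real; an n x n matrix
  is one whose entries vanish outside the index range {0..<n} x {0..<n}.\<close>

type_synonym rmat = "nat \<Rightarrow> nat \<Rightarrow> real"

definition Smat :: "nat \<Rightarrow> rmat set" where
  "Smat n = {A. (\<forall>i<n. \<forall>j<n. A i j = A j i) \<and> (\<forall>i j. \<not> (i < n \<and> j < n) \<longrightarrow> A i j = 0)}"

definition quad :: "nat \<Rightarrow> rmat \<Rightarrow> (nat \<Rightarrow> real) \<Rightarrow> real" where
  "quad n A x = (\<Sum>i<n. \<Sum>j<n. x i * A i j * x j)"

definition psd :: "nat \<Rightarrow> rmat \<Rightarrow> bool" where
  "psd n A \<longleftrightarrow> A \<in> Smat n \<and> (\<forall>x. 0 \<le> quad n A x)"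

definition pd :: "nat \<Rightarrow> rmat \<Rightarrow> bool" where
  "pd n A \<longleftrightarrow> A \<in> Smat n \<and> (\<forall>x. (\<exists>i<n. x i \<noteq> 0) \<longrightarrow> 0 < quad n A x)"

definition frob :: "nat \<Rightarrow> rmat \<Rightarrow> rmat \<Rightarrow> real" where
  "frob n A B = (\<Sum>i<n. \<Sum>j<n. A i j * B i j)"

definition frob_norm :: "nat \<Rightarrow> rmat \<Rightarrow> real" where
  "frob_norm n A = sqrt (frob n A A)"

definition idm :: "nat \<Rightarrow> rmat" where
  "idm n = (\<lambda>i j. if i < n \<and> j = i then 1 else 0)"

definition Lmap :: "nat \<Rightarrow> rmat \<Rightarrow> (nat \<Rightarrow> rmat) \<Rightarrow> (nat \<Rightarrow> real) \<Rightarrow> rmat" where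
  "Lmap m C A y = (\<lambda>a b. C a b - (\<Sum>i<m. A i a b * y i))"

definition bty :: "nat \<Rightarrow> (nat \<Rightarrow> real) \<Rightarrow> (nat \<Rightarrow> real) \<Rightarrow> real" where
  "bty m b y = (\<Sum>i<m. b i * y i)"

definition blk11 :: "nat \<Rightarrow> rmat \<Rightarrow> rmat" where
  "blk11 r Z = (\<lambda>i j. if i < r \<and> j < r then Z i j else 0)"

definition blk12 :: "nat \<Rightarrow> nat \<Rightarrow> rmat \<Rightarrow> rmat" where
  "blk12 n r Z = (\<lambda>i j. if i < r \<and> j < n - r then Z i (r + j) else 0)"

definition blk22 :: "nat \<Rightarrow> nat \<Rightarrow> rmat \<Rightarrow> rmat" where
  "blk22 n r Z = (\<lambda>i j. if i < n - r \<and> j < n - r then Z (r + i) (r + j) else 0)"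

definition norm12_sq :: "nat \<Rightarrow> nat \<Rightarrow> rmat \<Rightarrow> real" where
  "norm12_sq n r Z = (\<Sum>i<r. \<Sum>j<n - r. (blk12 n r Z i j)\<^sup>2)"

definition vP :: "nat \<Rightarrow> nat \<Rightarrow> rmat \<Rightarrow> (nat \<Rightarrow> rmat) \<Rightarrow> (nat \<Rightarrow> real) \<Rightarrow> real" where
  "vP n m C A b = Inf {frob n C X | X. psd n X \<and> (\<forall>i<m. frob n (A i) X = b i)}"

definition vD :: "nat \<Rightarrow> nat \<Rightarrow> rmat \<Rightarrow> (nat \<Rightarrow> rmat) \<Rightarrow> (nat \<Rightarrow> real) \<Rightarrow> real" where
  "vD n m C A b = Sup {bty m b y | y. psd n (Lmap m C A y)}"

definition mat_aff_comb :: "rmat set \<Rightarrow> rmat set" where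
  "mat_aff_comb S = {W. \<exists>(k::nat) (c::nat \<Rightarrow> real) (Zs::nat \<Rightarrow> rmat). (\<forall>j<k. Zs j \<in> S) \<and> (\<Sum>j<k. c j) = 1 \<and>
       W = (\<lambda>a b. \<Sum>j<k. c j * Zs j a b)}"

definition mat_rel_interior :: "nat \<Rightarrow> rmat set \<Rightarrow> rmat set" where
  "mat_rel_interior n S = {Z \<in> S. \<exists>e>0. \<forall>W \<in> mat_aff_comb S.
       frob_norm n (\<lambda>a b. W a b - Z a b) < e \<longrightarrow> W \<in> S}"

definition sing_deg_one :: "nat \<Rightarrow> nat \<Rightarrow> rmat \<Rightarrow> (nat \<Rightarrow> rmat) \<Rightarrow> bool" where
  "sing_deg_one n m C A \<longleftrightarrow> (\<exists>y. psd n (Lmap m C A y)) \<and>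
     (\<exists>X. psd n X \<and> X \<noteq> (\<lambda>a b. 0) \<and> frob n C X = 0 \<and> (\<forall>i<m. frob n (A i) X = 0) \<and>
        (\<exists>y. Lmap m C A y \<in> mat_rel_interior n {Z. psd n Z \<and> frob n Z X = 0}))"

definition rd1_obj :: "nat \<Rightarrow> nat \<Rightarrow> nat \<Rightarrow> rmat \<Rightarrow> (nat \<Rightarrow> rmat) \<Rightarrow> (nat \<Rightarrow> real) \<Rightarrow> real
    \<Rightarrow> real \<Rightarrow> (nat \<Rightarrow> real) \<Rightarrow> real" where
  "rd1_obj n m r C A b M \<alpha> y = bty m b y - norm12_sq n r (Lmap m C A y) / (M * \<alpha>)"

definition rd1_feas :: "nat \<Rightarrow> nat \<Rightarrow> rmat \<Rightarrow> (nat \<Rightarrow> rmat) \<Rightarrow> real \<Rightarrow> real \<Rightarrow> (nat \<Rightarrow> real) \<Rightarrow> bool" where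
  "rd1_feas n m C A \<alpha> t y \<longleftrightarrow> psd n (\<lambda>a b. Lmap m C A y a b + t * \<alpha> * idm n a b)"

definition rd1_opt_seq :: "nat \<Rightarrow> nat \<Rightarrow> nat \<Rightarrow> rmat \<Rightarrow> (nat \<Rightarrow> rmat) \<Rightarrow> (nat \<Rightarrow> real) \<Rightarrow> real
    \<Rightarrow> real \<Rightarrow> real \<Rightarrow> (nat \<Rightarrow> nat \<Rightarrow> real) \<Rightarrow> bool" where
  "rd1_opt_seq n m r C A b M \<alpha> t ys \<longleftrightarrow>
     (\<forall>k. rd1_feas n m C A \<alpha> t (ys k)) \<and>
     ((\<lambda>k. ereal (rd1_obj n m r C A b M \<alpha> (ys k))) \<longlonglongrightarrow>
        (SUP y \<in> {y. rd1_feas n m C A \<alpha> t y}. ereal (rd1_obj n m r C A b M \<alpha> y)))"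

end

theory Submission
  imports Defs
begin

text \<open>If X is primal feasible, every feasible point y of
  RD1(alpha,t) satisfies b^T y \<le> C \<bullet> X + t alpha tr X, because the trace inner product of two
  positive semidefinite matrices is nonnegative; for small t this is below v(P) + 1.
  Conversely, a near-optimal dual point with L12 = 0 is feasible for RD1(alpha,t) with the
  same objective, so the objective values of an optimal sequence eventually exceed
  v(D) - 1. The penalty ||L12||^2 / (M alpha) is then below v(P) - v(D) + 2.\<close>

definition unit_vec :: "nat \<Rightarrow> nat \<Rightarrow> real" where
  "unit_vec k i = (if i = k then 1 else 0)"

lemma sum_mult_unit_vec:
  assumes "k < n"
  shows "(\<Sum>i<n. f i * unit_vec k i) = f k" "(\<Sum>i<n. unit_vec k i * f i) = f k"
  using assms by (simp_all add: unit_vec_def if_distrib if_distribR cong: if_cong)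

lemma Smat_sym: "Q \<in> Smat n \<Longrightarrow> Q i j = Q j i"
  unfolding Smat_def by (cases "i < n \<and> j < n") auto

lemma quad_add_unit_vec:
  assumes "Q \<in> Smat n" "k < n"
  shows "quad n Q (\<lambda>i. x i + s * unit_vec k i)
           = quad n Q x + 2 * s * (\<Sum>j<n. Q k j * x j) + s\<^sup>2 * Q k k"
proof -
  have "quad n Q (\<lambda>i. x i + s * unit_vec k i)
          = quad n Q x + s * (\<Sum>i<n. unit_vec k i * (\<Sum>j<n. Q i j * x j))
            + s * (\<Sum>i<n. x i * (\<Sum>j<n. Q i j * unit_vec k j))
            + s\<^sup>2 * (\<Sum>i<n. unit_vec k i * (\<Sum>j<n. Q i j * unit_vec k j))"
    unfolding quad_def
    by (simp add: algebra_simps sum.distrib sum_distrib_left power2_eq_square)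
  also have "(\<Sum>i<n. x i * (\<Sum>j<n. Q i j * unit_vec k j)) = (\<Sum>j<n. Q k j * x j)"
    using assms by (simp add: sum_mult_unit_vec Smat_sym[of Q n _ k] mult.commute)
  finally show ?thesis
    using assms(2) by (simp add: sum_mult_unit_vec)
qed

lemma quad_unit_vec: "Q \<in> Smat n \<Longrightarrow> k < n \<Longrightarrow> quad n Q (unit_vec k) = Q k k"
  using quad_add_unit_vec[of Q n k "\<lambda>_. 0" 1] by (simp add: quad_def)

lemma psd_diag_nonneg: "psd n Q \<Longrightarrow> k < n \<Longrightarrow> 0 \<le> Q k k"
  using quad_unit_vec unfolding psd_def by metis

lemma psd_row_eq_0_if_diag_eq_0:
  assumes "psd n Q" "Q k k = 0"
  shows "Q k j = 0"
proof (cases "k < n \<and> j < n")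
  case False
  then show ?thesis using assms(1) unfolding psd_def Smat_def by auto
next
  case True
  have "0 \<le> quad n Q (\<lambda>i. unit_vec j i + s * unit_vec k i)" for s
    using assms(1) unfolding psd_def by blast
  then have "0 \<le> Q j j + 2 * s * Q k j" for s
    using True assms quad_add_unit_vec[of Q n k "unit_vec j"] quad_unit_vec[of Q n j]
    unfolding psd_def by (simp add: sum_mult_unit_vec)
  from this[of "- (Q j j + 1) / (2 * Q k j)"] show ?thesis
    by (cases "Q k j = 0") (auto simp: field_simps)
qed

lemma psd_schur_complement:
  assumes "psd n Q" "k < n" "0 < Q k k"
  shows "psd n (\<lambda>i j. Q i j - Q k i * Q k j / Q k k)"
  unfolding psd_def
proof (intro conjI allI)
  have Q: "Q \<in> Smat n" using assms(1) unfolding psd_def by blast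
  then have "Q k i = 0" if "\<not> i < n" for i
    using that unfolding Smat_def by blast
  with Q show "(\<lambda>i j. Q i j - Q k i * Q k j / Q k k) \<in> Smat n"
    unfolding Smat_def by auto
  fix x
  let ?r = "\<Sum>j<n. Q k j * x j"
  have "0 \<le> quad n Q (\<lambda>i. x i + (- ?r / Q k k) * unit_vec k i)"
    using assms(1) unfolding psd_def by blast
  also have "\<dots> = quad n Q x + 2 * (- ?r / Q k k) * ?r + (- ?r / Q k k)\<^sup>2 * Q k k"
    by (rule quad_add_unit_vec[OF Q assms(2)])
  also have "\<dots> = quad n Q x - ?r\<^sup>2 / Q k k"
    using assms(3) by (simp add: field_simps power2_eq_square)
  also have "\<dots> = quad n (\<lambda>i j. Q i j - Q k i * Q k j / Q k k) x"
    unfolding quad_def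
    by (simp add: algebra_simps sum_subtractf sum_distrib_left sum_distrib_right
        sum_divide_distrib power2_eq_square)
  finally show "0 \<le> quad n (\<lambda>i j. Q i j - Q k i * Q k j / Q k k) x" .
qed

lemma frob_nonneg_vanishing_below:
  assumes P: "\<forall>x. 0 \<le> quad n P x"
    and "k \<le> n" "psd n Q" "\<forall>i j. i < k \<or> j < k \<longrightarrow> Q i j = 0"
  shows "0 \<le> frob n P Q"
  using assms(2-)
proof (induction k arbitrary: Q rule: inc_induct)
  case base
  then show ?case unfolding frob_def by simp
next
  case (step k)
  have Q: "Q \<in> Smat n" using step.prems(1) unfolding psd_def by blast
  show ?case
  proof (cases "Q k k = 0")
    case True
    then have "Q k j = 0 \<and> Q j k = 0" for j
      using psd_row_eq_0_if_diag_eq_0[OF step.prems(1)] Smat_sym[OF Q] by metis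
    then have "\<forall>i j. i < Suc k \<or> j < Suc k \<longrightarrow> Q i j = 0"
      using step.prems(2) less_Suc_eq by auto
    then show ?thesis using step.IH step.prems(1) by blast
  next
    case False
    then have pos: "0 < Q k k" using psd_diag_nonneg[OF step.prems(1) step.hyps(2)] by simp
    \<comment> \<open>Q = Q' + Q_k Q_k^T / Q_kk, where the Schur complement Q' is PSD and vanishes on one
      more row and column, and the rank-one part contributes quad P Q_k / Q_kk \<ge> 0.\<close>
    define Q' where "Q' = (\<lambda>i j. Q i j - Q k i * Q k j / Q k k)"
    have "Q k i = 0" if "i < k" for i
      using step.prems(2) Smat_sym[OF Q, of k i] that by auto
    then have "Q' i j = 0" if "i < Suc k \<or> j < Suc k" for i j
      using that step.prems(2) pos Smat_sym[OF Q, of i k]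
      unfolding Q'_def less_Suc_eq by (elim disjE) auto
    then have "0 \<le> frob n P Q'"
      using step.IH psd_schur_complement[OF step.prems(1) step.hyps(2) pos] unfolding Q'_def
      by blast
    moreover have "0 \<le> quad n P (Q k) / Q k k"
      using P pos by simp
    moreover have "frob n P Q = frob n P Q' + quad n P (Q k) / Q k k"
      unfolding frob_def quad_def Q'_def
      by (simp add: algebra_simps sum_subtractf sum_divide_distrib)
    ultimately show ?thesis by linarith
  qed
qed

lemma frob_nonneg: "\<forall>x. 0 \<le> quad n P x \<Longrightarrow> psd n Q \<Longrightarrow> 0 \<le> frob n P Q"
  using frob_nonneg_vanishing_below[of n P 0 Q] by simp

definition mat_trace :: "nat \<Rightarrow> rmat \<Rightarrow> real" where
  "mat_trace n X = (\<Sum>i<n. X i i)"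

lemma mat_trace_nonneg: "psd n X \<Longrightarrow> 0 \<le> mat_trace n X"
  unfolding mat_trace_def by (meson psd_diag_nonneg lessThan_iff sum_nonneg)

lemma frob_Lmap: "frob n (Lmap m C A y) X = frob n C X - (\<Sum>i<m. y i * frob n (A i) X)"
  unfolding frob_def Lmap_def
  by (simp add: algebra_simps sum_subtractf sum_distrib_left sum_distrib_right
      sum.swap[of _ "{..<m}"])

lemma sum_idm_row: "i < n \<Longrightarrow> (\<Sum>j<n. idm n i j * f j) = f i"
  unfolding idm_def by (simp add: if_distrib if_distribR cong: if_cong)

lemma frob_add_scaled_idm:
  "frob n (\<lambda>a b. L a b + c * idm n a b) X = frob n L X + c * mat_trace n X"
proof -
  have "frob n (\<lambda>a b. L a b + c * idm n a b) X
          = frob n L X + c * (\<Sum>i<n. \<Sum>j<n. idm n i j * X i j)"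
    unfolding frob_def by (simp add: distrib_right sum.distrib sum_distrib_left mult.assoc)
  also have "(\<Sum>i<n. \<Sum>j<n. idm n i j * X i j) = mat_trace n X"
    unfolding mat_trace_def by (rule sum.cong) (simp_all add: sum_idm_row)
  finally show ?thesis .
qed

lemma quad_add_scaled_idm:
  "quad n (\<lambda>a b. L a b + c * idm n a b) x = quad n L x + c * (\<Sum>i<n. (x i)\<^sup>2)"
proof -
  have "quad n (\<lambda>a b. L a b + c * idm n a b) x
          = quad n L x + c * (\<Sum>i<n. x i * (\<Sum>j<n. idm n i j * x j))"
    unfolding quad_def
    by (simp add: distrib_left distrib_right sum.distrib sum_distrib_left mult_ac)
  also have "(\<Sum>i<n. x i * (\<Sum>j<n. idm n i j * x j)) = (\<Sum>i<n. (x i)\<^sup>2)"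
    by (rule sum.cong) (simp_all add: sum_idm_row power2_eq_square)
  finally show ?thesis .
qed

lemma psd_add_scaled_idm:
  assumes "psd n L" "0 \<le> c"
  shows "psd n (\<lambda>a b. L a b + c * idm n a b)"
  using assms unfolding psd_def quad_add_scaled_idm
  by (auto simp: sum_nonneg Smat_def idm_def)

lemma rd1_feas_bty_le:
  assumes "rd1_feas n m C A \<alpha> t y" "psd n X" "\<forall>i<m. frob n (A i) X = b i"
  shows "bty m b y \<le> frob n C X + t * \<alpha> * mat_trace n X"
proof -
  have dual_obj: "(\<Sum>i<m. y i * frob n (A i) X) = bty m b y"
    unfolding bty_def using assms(3) by (auto intro!: sum.cong)
  have "\<forall>x. 0 \<le> quad n (\<lambda>a b. Lmap m C A y a b + t * \<alpha> * idm n a b) x"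
    using assms(1) unfolding rd1_feas_def psd_def by blast
  then have "0 \<le> frob n (\<lambda>a b. Lmap m C A y a b + t * \<alpha> * idm n a b) X"
    using assms(2) by (rule frob_nonneg)
  also have "\<dots> = frob n C X - bty m b y + t * \<alpha> * mat_trace n X"
    by (simp add: frob_add_scaled_idm frob_Lmap dual_obj)
  finally show ?thesis by simp
qed

lemma rd1_feas_if_dual_feas:
  "psd n (Lmap m C A y) \<Longrightarrow> 0 \<le> t * \<alpha> \<Longrightarrow> rd1_feas n m C A \<alpha> t y"
  unfolding rd1_feas_def by (rule psd_add_scaled_idm)

lemma rd1_opt_seq_eventually_gt:
  assumes "rd1_opt_seq n m r C A b M \<alpha> t ys" "rd1_feas n m C A \<alpha> t y"
    and "v < rd1_obj n m r C A b M \<alpha> y"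
  shows "\<forall>\<^sub>F k in sequentially. v < rd1_obj n m r C A b M \<alpha> (ys k)"
proof -
  let ?obj = "\<lambda>y. ereal (rd1_obj n m r C A b M \<alpha> y)"
  let ?sup = "SUP y \<in> {y. rd1_feas n m C A \<alpha> t y}. ?obj y"
  have lim: "(\<lambda>k. ?obj (ys k)) \<longlonglongrightarrow> ?sup"
    using assms(1) unfolding rd1_opt_seq_def by blast
  have "ereal v < ?obj y" using assms(3) by simp
  also have "\<dots> \<le> ?sup"
    using assms(2) by (intro SUP_upper) simp
  finally have "\<forall>\<^sub>F k in sequentially. ereal v < ?obj (ys k)"
    by (rule order_tendstoD(1)[OF lim])
  then show ?thesis by simp
qed

lemma vP_near_optimal:
  assumes "\<exists>X. psd n X \<and> (\<forall>i<m. frob n (A i) X = b i)" "0 < e"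
  obtains X where "psd n X" "\<forall>i<m. frob n (A i) X = b i" "frob n C X < vP n m C A b + e"
proof -
  let ?S = "{frob n C X | X. psd n X \<and> (\<forall>i<m. frob n (A i) X = b i)}"
  have "?S \<noteq> {}" using assms(1) by blast
  moreover have "Inf ?S < vP n m C A b + e" unfolding vP_def using assms(2) by simp
  ultimately obtain v where "v \<in> ?S" "v < vP n m C A b + e" by (meson cInf_lessD)
  then show ?thesis using that by blast
qed

lemma vD_near_optimal:
  assumes "\<exists>y. psd n (Lmap m C A y)" "0 < e"
  obtains y where "psd n (Lmap m C A y)" "vD n m C A b - e < bty m b y"
proof -
  let ?S = "{bty m b y | y. psd n (Lmap m C A y)}"
  have "?S \<noteq> {}" using assms(1) by blast
  moreover have "vD n m C A b - e < Sup ?S" unfolding vD_def using assms(2) by simp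
  ultimately obtain v where "v \<in> ?S" "vD n m C A b - e < v" by (meson less_cSupD)
  then show ?thesis using that by blast
qed

lemma rd1_opt_seq_norm12_sq_less:
  assumes ys: "rd1_opt_seq n m r C A b M \<alpha> t ys"
    and "0 < M" "0 < \<alpha>" "0 \<le> t" "0 < e"
    and X: "psd n X" "\<forall>i<m. frob n (A i) X = b i"
    and y: "psd n (Lmap m C A y)" "norm12_sq n r (Lmap m C A y) = 0"
  shows "\<forall>\<^sub>F k in sequentially. norm12_sq n r (Lmap m C A (ys k))
           < M * \<alpha> * (frob n C X + t * \<alpha> * mat_trace n X - bty m b y + e)"
proof -
  have "rd1_feas n m C A \<alpha> t y"
    using y(1) assms(3,4) by (simp add: rd1_feas_if_dual_feas)
  moreover have "bty m b y - e < rd1_obj n m r C A b M \<alpha> y"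
    using y(2) assms(5) unfolding rd1_obj_def by simp
  ultimately have "\<forall>\<^sub>F k in sequentially. bty m b y - e < rd1_obj n m r C A b M \<alpha> (ys k)"
    by (rule rd1_opt_seq_eventually_gt[OF ys])
  moreover have "norm12_sq n r (Lmap m C A (ys k))
                   < M * \<alpha> * (frob n C X + t * \<alpha> * mat_trace n X - bty m b y + e)"
    if "bty m b y - e < rd1_obj n m r C A b M \<alpha> (ys k)" for k
  proof -
    have "rd1_feas n m C A \<alpha> t (ys k)"
      using ys unfolding rd1_opt_seq_def by blast
    then have "bty m b (ys k) \<le> frob n C X + t * \<alpha> * mat_trace n X"
      using X by (rule rd1_feas_bty_le)
    then have "norm12_sq n r (Lmap m C A (ys k)) / (M * \<alpha>)
                 < frob n C X + t * \<alpha> * mat_trace n X - bty m b y + e"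
      using that unfolding rd1_obj_def by linarith
    then show ?thesis
      using assms(2,3) by (simp add: pos_divide_less_eq mult_ac)
  qed
  ultimately show ?thesis
    by (rule eventually_mono)
qed

theorem lemma4:
  fixes n m r :: nat and C :: rmat and A :: "nat \<Rightarrow> rmat" and b :: "nat \<Rightarrow> real"
    and M :: real
  assumes symC: "C \<in> Smat n"
    and symA: "\<forall>i<m. A i \<in> Smat n"
    and Pfeas: "\<exists>X. psd n X \<and> (\<forall>i<m. frob n (A i) X = b i)"
    and Dfeas: "\<exists>y. psd n (Lmap m C A y)"
    and sd1: "sing_deg_one n m C A"
    and rn: "r < n"
    and a: "\<forall>y. psd n (Lmap m C A y) \<longleftrightarrow>
               (blk12 n r (Lmap m C A y) = (\<lambda>i j. 0) \<and> blk22 n r (Lmap m C A y) = (\<lambda>i j. 0)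
                \<and> psd r (blk11 r (Lmap m C A y)))"
    and b: "\<exists>y. blk12 n r (Lmap m C A y) = (\<lambda>i j. 0) \<and> blk22 n r (Lmap m C A y) = (\<lambda>i j. 0)
                \<and> pd r (blk11 r (Lmap m C A y))"
    and c: "\<exists>X. X \<in> Smat n \<and> (\<forall>i j. \<not> (r \<le> i \<and> r \<le> j) \<longrightarrow> X i j = 0)
                \<and> pd (n - r) (blk22 n r X) \<and> frob n C X = 0 \<and> (\<forall>i<m. frob n (A i) X = 0)"
    and Mpos: "M > 0"
    and Mbound: "\<forall>t\<ge>0. \<forall>y. psd (n - r) (\<lambda>i j. blk22 n r (Lmap m C A y) i j + t * idm (n - r) i j)
                   \<longrightarrow> psd (n - r) (\<lambda>i j. t * M * idm (n - r) i j
                         - (blk22 n r (Lmap m C A y) i j + t * idm (n - r) i j))"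
  shows "\<forall>\<alpha>>0. \<exists>th>0. \<forall>t. 0 < t \<and> t < th \<longrightarrow>
           (\<forall>ys. rd1_opt_seq n m r C A b M \<alpha> t ys \<longrightarrow>
              (\<exists>k0. \<forall>k\<ge>k0. norm12_sq n r (Lmap m C A (ys k))
                               \<le> M * (vP n m C A b - vD n m C A b + 2) * \<alpha>))"
proof (intro allI impI)
  fix \<alpha> :: real
  assume \<alpha>: "0 < \<alpha>"
  obtain X where X: "psd n X" "\<forall>i<m. frob n (A i) X = b i" "frob n C X < vP n m C A b + 1/2"
    using vP_near_optimal[OF Pfeas, of "1/2"] by auto
  obtain y where y: "psd n (Lmap m C A y)" "vD n m C A b - 1/2 < bty m b y"
    using vD_near_optimal[OF Dfeas, of "1/2"] by auto
  have "norm12_sq n r (Lmap m C A y) = 0"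
    using a y(1) unfolding norm12_sq_def by simp
  note bound = rd1_opt_seq_norm12_sq_less[OF _ Mpos \<alpha> _ _ X(1,2) y(1) this, of _ _ "1/2"]
  have trX: "0 \<le> mat_trace n X" using X(1) by (rule mat_trace_nonneg)
  define th where "th = 1 / (2 * \<alpha> * (mat_trace n X + 1))"
  have "\<forall>\<^sub>F k in sequentially. norm12_sq n r (Lmap m C A (ys k))
          \<le> M * (vP n m C A b - vD n m C A b + 2) * \<alpha>"
    if t: "0 < t" "t < th" and ys: "rd1_opt_seq n m r C A b M \<alpha> t ys" for t ys
  proof -
    have "t * (2 * \<alpha> * (mat_trace n X + 1)) < 1"
      using t \<alpha> trX by (simp add: th_def pos_less_divide_eq)
    moreover have "0 < t * \<alpha>" using t \<alpha> by simp
    ultimately have "t * \<alpha> * mat_trace n X \<le> 1/2"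
      by (simp add: algebra_simps)
    then have "M * \<alpha> * (frob n C X + t * \<alpha> * mat_trace n X - bty m b y + 1/2)
                 \<le> M * (vP n m C A b - vD n m C A b + 2) * \<alpha>"
      using X(3) y(2) Mpos \<alpha> by (simp add: mult_left_mono mult.commute)
    then show ?thesis
      using bound[OF ys] t by (auto elim: eventually_mono)
  qed
  moreover have "0 < th" unfolding th_def using \<alpha> trX by simp
  ultimately show "\<exists>th>0. \<forall>t. 0 < t \<and> t < th \<longrightarrow>
           (\<forall>ys. rd1_opt_seq n m r C A b M \<alpha> t ys \<longrightarrow>
              (\<exists>k0. \<forall>k\<ge>k0. norm12_sq n r (Lmap m C A (ys k))
                               \<le> M * (vP n m C A b - vD n m C A b + 2) * \<alpha>))"
    unfolding eventually_sequentially by blast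
qed

end
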